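(* For $\tau>0$, $\zeta>0$, $s>0$, consider estimating $\theta\in\mathbb{R}$ from $\mathbf{w}\sim\mathcal{N}\big((s\theta+\delta,\theta)^\top,I_2\big)$ where $|\theta|\le\tau$ and $|\delta|\le\zeta$. Define $$R_L(\tau,\zeta,s)=\min_{\hat\theta\text{ linear}}\max_{|\theta|\le\tau,|\delta|\le\zeta}\mathbb{E}(\hat\theta(\mathbf{w})-\theta)^2,\qquad R_N(\tau,\zeta,s)=\inf_{\hat\theta}\max_{|\theta|\le\tau,|\delta|\le\zeta}\mathbb{E}(\hat\theta(\mathbf{w})-\theta)^2,$$ where linear means $\hat\theta(\mathbf{w})=aw_1+bw_2$ with $a,b\in\mathbb{R}$, and the second infimum is over all measurable $\hat\theta:\mathbb{R}^2\to\mathbb{R}$. Then $R_L(\tau,\zeta,s)\le\frac{27}{2}R_N(\tau,\zeta,s)$. *)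

theory Defs
  imports "HOL-Probability.Probability"
begin

definition gauss2 :: "real \<Rightarrow> real \<Rightarrow> (real \<times> real) measure" where
  "gauss2 m1 m2 = density (lborel \<Otimes>\<^sub>M lborel)
     (\<lambda>(x, y). ennreal (normal_density m1 1 x * normal_density m2 1 y))"

definition risk :: "real \<Rightarrow> ((real \<times> real) \<Rightarrow> real) \<Rightarrow> real \<Rightarrow> real \<Rightarrow> ennreal" where
  "risk s est \<theta> \<delta> = (\<integral>\<^sup>+ w. ennreal ((est w - \<theta>)\<^sup>2) \<partial>gauss2 (s * \<theta> + \<delta>) \<theta>)"

definition max_risk :: "real \<Rightarrow> real \<Rightarrow> real \<Rightarrow> ((real \<times> real) \<Rightarrow> real) \<Rightarrow> ennreal" where
  "max_risk \<tau> \<zeta> s est = (SUP (\<theta>, \<delta>) \<in> {(\<theta>, \<delta>). \<bar>\<theta>\<bar> \<le> \<tau> \<and> \<bar>\<delta>\<bar> \<le> \<zeta>}. risk s est \<theta> \<delta>)"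

definition R_L :: "real \<Rightarrow> real \<Rightarrow> real \<Rightarrow> ennreal" where
  "R_L \<tau> \<zeta> s = (INF (a, b) \<in> (UNIV :: (real \<times> real) set).
       max_risk \<tau> \<zeta> s (\<lambda>w. a * fst w + b * snd w))"

definition R_N :: "real \<Rightarrow> real \<Rightarrow> real \<Rightarrow> ennreal" where
  "R_N \<tau> \<zeta> s = (INF est \<in> borel_measurable (borel \<Otimes>\<^sub>M borel). max_risk \<tau> \<zeta> s est)"

end

theory Submission
  imports Defs
begin

(* Upper bound: the linear estimators 0, w2 and w1/s have maximal risks tau^2, 1 and
   (1 + zeta^2)/s^2.
   Lower bound (Le Cam's two-point method): the parameters (theta, delta) = (-Delta, d) and
   (Delta, -d) yield Gaussian densities p0, p1 with Bhattacharyya affinity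
   rho = int sqrt (p0 p1) = exp (-(Delta^2 + (s Delta - d)^2) / 2).  Since
   2 Delta sqrt (p0 p1) <= (|est + Delta| + |est - Delta|) sqrt (p0 p1), Cauchy-Schwarz
   (applied pointwise as AM-GM) bounds 2 Delta rho by sqrt R0 + sqrt R1, so one of the two
   risks is at least Delta^2 rho^2.  Taking Delta = min (tau, 1, max (1, zeta) / s) and
   d = min (zeta, s Delta) keeps the exponent of rho^2 at most 1 if zeta >= 1 and at most
   2 - zeta if zeta < 1; comparing Delta^2 rho^2 with the upper bound gives the factor 27/2. *)

lemma nn_integral_normal_density: "(\<integral>\<^sup>+ x. ennreal (normal_density m 1 x) \<partial>lborel) = 1"
  by (subst nn_integral_eq_integral) auto

lemma nn_integral_normal_density_affine_sq:
  "(\<integral>\<^sup>+ x. ennreal (normal_density m 1 x * (\<alpha> * x - \<beta>)\<^sup>2) \<partial>lborel) = ennreal (\<alpha>\<^sup>2 + (\<alpha> * m - \<beta>)\<^sup>2)"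
proof -
  have var: "has_bochner_integral lborel (\<lambda>x. normal_density m 1 x * (x - m) ^ (2 * 1)) 1"
    using normal_moment_even[of 1 m 1] by simp
  have mean: "has_bochner_integral lborel (\<lambda>x. normal_density m 1 x * (x - m) ^ (2 * 0 + 1)) 0"
    using normal_moment_odd[of 1 m 0] by simp
  have mass: "has_bochner_integral lborel (normal_density m 1) 1"
    by (simp add: has_bochner_integral_iff)
  have "has_bochner_integral lborel (\<lambda>x. \<alpha>\<^sup>2 * (normal_density m 1 x * (x - m) ^ (2 * 1))
      + 2 * \<alpha> * (\<alpha> * m - \<beta>) * (normal_density m 1 x * (x - m) ^ (2 * 0 + 1))
      + (\<alpha> * m - \<beta>)\<^sup>2 * normal_density m 1 x) (\<alpha>\<^sup>2 * 1 + 2 * \<alpha> * (\<alpha> * m - \<beta>) * 0 + (\<alpha> * m - \<beta>)\<^sup>2 * 1)"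
    by (intro has_bochner_integral_add has_bochner_integral_mult_right var mean mass)
  also have "(\<lambda>x. \<alpha>\<^sup>2 * (normal_density m 1 x * (x - m) ^ (2 * 1))
      + 2 * \<alpha> * (\<alpha> * m - \<beta>) * (normal_density m 1 x * (x - m) ^ (2 * 0 + 1))
      + (\<alpha> * m - \<beta>)\<^sup>2 * normal_density m 1 x) = (\<lambda>x. normal_density m 1 x * (\<alpha> * x - \<beta>)\<^sup>2)"
    by (rule ext) (simp add: power2_eq_square algebra_simps)
  finally show ?thesis
    by (subst nn_integral_eq_integral) (auto simp: has_bochner_integral_iff)
qed

lemma normal_density_mult:
  "normal_density a 1 x * normal_density b 1 x =
    exp (- (a - b)\<^sup>2 / 4) * (normal_density ((a + b) / 2) 1 x)\<^sup>2"
proof -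
  have "- (x - a)\<^sup>2 / 2 + - (x - b)\<^sup>2 / 2 = - (a - b)\<^sup>2 / 4 + 2 * (- (x - (a + b) / 2)\<^sup>2 / 2)"
    by (simp add: power2_eq_square field_simps)
  then have "exp (- (x - a)\<^sup>2 / 2) * exp (- (x - b)\<^sup>2 / 2) = exp (- (a - b)\<^sup>2 / 4) * (exp (- (x - (a + b) / 2)\<^sup>2 / 2))\<^sup>2"
    by (metis exp_add exp_double)
  then show ?thesis
    by (simp add: normal_density_def power_mult_distrib power_divide)
qed

lemma sqrt_normal_density_mult:
  "sqrt (normal_density a 1 x * normal_density b 1 x) =
    exp (- (a - b)\<^sup>2 / 8) * normal_density ((a + b) / 2) 1 x"
proof (rule real_sqrt_unique)
  have "(exp (- (a - b)\<^sup>2 / 8))\<^sup>2 = exp (- (a - b)\<^sup>2 / 4)"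
    by (simp flip: exp_double)
  then show "(exp (- (a - b)\<^sup>2 / 8) * normal_density ((a + b) / 2) 1 x)\<^sup>2 =
      normal_density a 1 x * normal_density b 1 x"
    by (simp add: normal_density_mult power_mult_distrib)
qed simp

lemma nn_integral_gauss2:
  assumes "f \<in> borel_measurable (lborel \<Otimes>\<^sub>M lborel)"
  shows "(\<integral>\<^sup>+ w. f w \<partial>gauss2 m n) =
    (\<integral>\<^sup>+ w. ennreal (normal_density m 1 (fst w) * normal_density n 1 (snd w)) * f w \<partial>(lborel \<Otimes>\<^sub>M lborel))"
  unfolding gauss2_def
  by (subst nn_integral_density) (auto intro!: nn_integral_cong simp: split_beta assms)

lemma nn_integral_gauss2_product:
  assumes [measurable]: "f \<in> borel_measurable borel" "g \<in> borel_measurable borel"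
    and "\<And>x. 0 \<le> f x" "\<And>y. 0 \<le> g y"
  shows "(\<integral>\<^sup>+ w. ennreal (f (fst w) * g (snd w)) \<partial>gauss2 m n) =
    (\<integral>\<^sup>+ x. ennreal (normal_density m 1 x * f x) \<partial>lborel) *
    (\<integral>\<^sup>+ y. ennreal (normal_density n 1 y * g y) \<partial>lborel)"
proof -
  have "(\<integral>\<^sup>+ w. ennreal (f (fst w) * g (snd w)) \<partial>gauss2 m n) =
      (\<integral>\<^sup>+ x. \<integral>\<^sup>+ y. ennreal (normal_density m 1 x * f x) * ennreal (normal_density n 1 y * g y) \<partial>lborel \<partial>lborel)"
    by (subst nn_integral_gauss2, measurable, subst lborel.nn_integral_fst[symmetric])
      (auto intro!: nn_integral_cong simp: ennreal_mult''[symmetric] assms mult_ac)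
  also have "\<dots> = (\<integral>\<^sup>+ x. ennreal (normal_density m 1 x * f x) *
      (\<integral>\<^sup>+ y. ennreal (normal_density n 1 y * g y) \<partial>lborel) \<partial>lborel)"
    by (rule nn_integral_cong) (rule nn_integral_cmult, measurable)
  also have "\<dots> = (\<integral>\<^sup>+ x. ennreal (normal_density m 1 x * f x) \<partial>lborel) *
      (\<integral>\<^sup>+ y. ennreal (normal_density n 1 y * g y) \<partial>lborel)"
    by (rule nn_integral_multc) measurable
  finally show ?thesis .
qed

lemma nn_integral_normal_density_pair:
  "(\<integral>\<^sup>+ w. ennreal (normal_density m 1 (fst w) * normal_density n 1 (snd w)) \<partial>(lborel \<Otimes>\<^sub>M lborel)) = 1"
proof -
  have "(\<integral>\<^sup>+ w. ennreal (normal_density m 1 (fst w) * normal_density n 1 (snd w)) \<partial>(lborel \<Otimes>\<^sub>M lborel))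
      = (\<integral>\<^sup>+ w. ennreal ((\<lambda>x. 1) (fst w) * (\<lambda>y. 1) (snd w)) \<partial>gauss2 m n)"
    by (subst nn_integral_gauss2) (auto simp: ennreal_mult''[symmetric] mult_ac)
  also have "\<dots> = 1"
    by (subst nn_integral_gauss2_product) (auto simp: nn_integral_normal_density)
  finally show ?thesis .
qed

lemma nn_integral_sqrt_normal_density_pair:
  "(\<integral>\<^sup>+ w. sqrt ((normal_density a1 1 (fst w) * normal_density a2 1 (snd w)) *
      (normal_density b1 1 (fst w) * normal_density b2 1 (snd w))) \<partial>(lborel \<Otimes>\<^sub>M lborel)) =
    ennreal (exp (- ((a1 - b1)\<^sup>2 + (a2 - b2)\<^sup>2) / 8))"
proof -
  have "sqrt ((normal_density a1 1 x * normal_density a2 1 y) * (normal_density b1 1 x * normal_density b2 1 y)) =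
      sqrt (normal_density a1 1 x * normal_density b1 1 x) * sqrt (normal_density a2 1 y * normal_density b2 1 y)"
    for x y by (simp add: real_sqrt_mult mult_ac)
  also have "\<dots> x y = exp (- ((a1 - b1)\<^sup>2 + (a2 - b2)\<^sup>2) / 8) *
      (normal_density ((a1 + b1) / 2) 1 x * normal_density ((a2 + b2) / 2) 1 y)" for x y
  proof -
    have "- ((a1 - b1)\<^sup>2 + (a2 - b2)\<^sup>2) / 8 = - (a1 - b1)\<^sup>2 / 8 + - (a2 - b2)\<^sup>2 / 8"
      by simp
    then show ?thesis
      by (simp only: sqrt_normal_density_mult exp_add) (simp add: mult_ac)
  qed
  finally show ?thesis
    using nn_integral_normal_density_pair[unfolded ennreal_mult''[OF normal_density_nonneg]]
    by (simp add: ennreal_mult nn_integral_cmult)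
qed

lemma risk_scaled_fst: "risk s (\<lambda>w. a * fst w + 0 * snd w) \<theta> \<delta> = ennreal (a\<^sup>2 + (a * (s * \<theta> + \<delta>) - \<theta>)\<^sup>2)"
  using nn_integral_gauss2_product[of "\<lambda>x. (a * x - \<theta>)\<^sup>2" "\<lambda>y. 1" "s * \<theta> + \<delta>" \<theta>]
  by (simp add: risk_def nn_integral_normal_density nn_integral_normal_density_affine_sq)

lemma risk_scaled_snd: "risk s (\<lambda>w. 0 * fst w + b * snd w) \<theta> \<delta> = ennreal (b\<^sup>2 + (b * \<theta> - \<theta>)\<^sup>2)"
  using nn_integral_gauss2_product[of "\<lambda>x. 1" "\<lambda>y. (b * y - \<theta>)\<^sup>2" "s * \<theta> + \<delta>" \<theta>]
  by (simp add: risk_def nn_integral_normal_density nn_integral_normal_density_affine_sq)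

lemma R_L_le_min:
  assumes "s \<noteq> 0"
  shows "R_L \<tau> \<zeta> s \<le> ennreal (min (\<tau>\<^sup>2) (min 1 ((1 + \<zeta>\<^sup>2) / s\<^sup>2)))"
proof -
  have linear: "R_L \<tau> \<zeta> s \<le> max_risk \<tau> \<zeta> s (\<lambda>w. a * fst w + b * snd w)" for a b
    unfolding R_L_def by (rule INF_lower2[of "(a, b)"]) auto
  have zero: "max_risk \<tau> \<zeta> s (\<lambda>w. 0 * fst w + 0 * snd w) \<le> ennreal (\<tau>\<^sup>2)"
    unfolding max_risk_def
  proof (rule SUP_least, clarify)
    fix \<theta> \<delta> :: real
    assume "\<bar>\<theta>\<bar> \<le> \<tau>"
    then have "\<theta>\<^sup>2 \<le> \<tau>\<^sup>2"
      by (metis abs_ge_zero power2_abs power_mono)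
    then show "risk s (\<lambda>w. 0 * fst w + 0 * snd w) \<theta> \<delta> \<le> ennreal (\<tau>\<^sup>2)"
      using risk_scaled_fst[of s 0 \<theta> \<delta>] by simp
  qed
  have snd: "max_risk \<tau> \<zeta> s (\<lambda>w. 0 * fst w + 1 * snd w) \<le> 1"
    unfolding max_risk_def by (rule SUP_least, clarify, subst risk_scaled_snd, simp)
  have fst: "max_risk \<tau> \<zeta> s (\<lambda>w. (1 / s) * fst w + 0 * snd w) \<le> ennreal ((1 + \<zeta>\<^sup>2) / s\<^sup>2)"
    unfolding max_risk_def
  proof (rule SUP_least, clarify)
    fix \<theta> \<delta> :: real
    assume "\<bar>\<delta>\<bar> \<le> \<zeta>"
    then have "\<delta>\<^sup>2 \<le> \<zeta>\<^sup>2"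
      by (metis abs_ge_zero power2_abs power_mono)
    moreover have "(1 / s)\<^sup>2 + ((1 / s) * (s * \<theta> + \<delta>) - \<theta>)\<^sup>2 = (1 + \<delta>\<^sup>2) / s\<^sup>2"
      using assms by (simp add: field_simps power2_eq_square)
    ultimately have "(1 / s)\<^sup>2 + ((1 / s) * (s * \<theta> + \<delta>) - \<theta>)\<^sup>2 \<le> (1 + \<zeta>\<^sup>2) / s\<^sup>2"
      by (simp add: divide_right_mono)
    then show "risk s (\<lambda>w. (1 / s) * fst w + 0 * snd w) \<theta> \<delta> \<le> ennreal ((1 + \<zeta>\<^sup>2) / s\<^sup>2)"
      by (subst risk_scaled_fst) (rule ennreal_leI)
  qed
  show ?thesis
    using order_trans[OF linear zero] order_trans[OF linear snd] order_trans[OF linear fst]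
    by (simp add: min_def)
qed

lemma two_point_pointwise_bound:
  fixes p0 p1 t y :: real
  assumes "0 \<le> p0" "0 \<le> p1" "0 < t"
  shows "2 * \<bar>\<theta>1 - \<theta>0\<bar> * sqrt (p0 * p1) \<le>
    t * (p0 * (y - \<theta>0)\<^sup>2 + p1 * (y - \<theta>1)\<^sup>2) + (p0 + p1) / t"
proof -
  have amgm: "2 * sqrt (a * b) \<le> t * a + b / t" if "0 \<le> a" "0 \<le> b" for a b
    using arith_geo_mean_sqrt[of "t * a" "b / t"] that \<open>0 < t\<close> by simp
  have "\<bar>\<theta>1 - \<theta>0\<bar> * sqrt (p0 * p1) \<le> (\<bar>y - \<theta>0\<bar> + \<bar>y - \<theta>1\<bar>) * sqrt (p0 * p1)"
    using assms by (intro mult_right_mono) auto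
  also have "\<dots> = sqrt (p0 * (y - \<theta>0)\<^sup>2 * p1) + sqrt (p1 * (y - \<theta>1)\<^sup>2 * p0)"
    by (simp add: real_sqrt_mult algebra_simps)
  finally have triangle: "\<bar>\<theta>1 - \<theta>0\<bar> * sqrt (p0 * p1) \<le>
      sqrt (p0 * (y - \<theta>0)\<^sup>2 * p1) + sqrt (p1 * (y - \<theta>1)\<^sup>2 * p0)" .
  have "2 * sqrt (p0 * (y - \<theta>0)\<^sup>2 * p1) \<le> t * (p0 * (y - \<theta>0)\<^sup>2) + p1 / t"
    using assms by (intro amgm) auto
  moreover have "2 * sqrt (p1 * (y - \<theta>1)\<^sup>2 * p0) \<le> t * (p1 * (y - \<theta>1)\<^sup>2) + p0 / t"
    using assms by (intro amgm) auto
  ultimately show ?thesis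
    using triangle distrib_left[of t "p0 * (y - \<theta>0)\<^sup>2" "p1 * (y - \<theta>1)\<^sup>2"]
      add_divide_distrib[of p0 p1 t] mult.assoc[of 2 "\<bar>\<theta>1 - \<theta>0\<bar>"] by linarith
qed

lemma two_point_integral_bound:
  fixes p0 p1 f :: "'a \<Rightarrow> real"
  assumes [measurable]: "p0 \<in> borel_measurable M" "p1 \<in> borel_measurable M" "f \<in> borel_measurable M"
    and nonneg: "\<And>x. 0 \<le> p0 x" "\<And>x. 0 \<le> p1 x"
    and mass: "(\<integral>\<^sup>+ x. p0 x \<partial>M) = 1" "(\<integral>\<^sup>+ x. p1 x \<partial>M) = 1"
    and "0 < t"
  shows "ennreal (2 * \<bar>\<theta>1 - \<theta>0\<bar>) * (\<integral>\<^sup>+ x. sqrt (p0 x * p1 x) \<partial>M) \<le>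
    ennreal t * ((\<integral>\<^sup>+ x. p0 x * (f x - \<theta>0)\<^sup>2 \<partial>M) + (\<integral>\<^sup>+ x. p1 x * (f x - \<theta>1)\<^sup>2 \<partial>M)) +
    ennreal (1 / t) * 2"
proof -
  have "ennreal (2 * \<bar>\<theta>1 - \<theta>0\<bar>) * (\<integral>\<^sup>+ x. sqrt (p0 x * p1 x) \<partial>M) =
      (\<integral>\<^sup>+ x. 2 * \<bar>\<theta>1 - \<theta>0\<bar> * sqrt (p0 x * p1 x) \<partial>M)"
    by (subst nn_integral_cmult[symmetric], measurable)
      (intro nn_integral_cong ennreal_mult[symmetric]; simp add: nonneg)
  also have "\<dots> \<le> (\<integral>\<^sup>+ x. t * (p0 x * (f x - \<theta>0)\<^sup>2 + p1 x * (f x - \<theta>1)\<^sup>2) + (p0 x + p1 x) / t \<partial>M)"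
    using nonneg \<open>0 < t\<close> by (intro nn_integral_mono ennreal_leI two_point_pointwise_bound)
  also have "\<dots> = (\<integral>\<^sup>+ x. ennreal t * (ennreal (p0 x * (f x - \<theta>0)\<^sup>2) + ennreal (p1 x * (f x - \<theta>1)\<^sup>2))
      + ennreal (1 / t) * (ennreal (p0 x) + ennreal (p1 x)) \<partial>M)"
    using nonneg \<open>0 < t\<close>
    by (intro nn_integral_cong) (simp add: ennreal_mult[symmetric] ennreal_plus[symmetric] del: ennreal_plus)
  also have "\<dots> = ennreal t * ((\<integral>\<^sup>+ x. p0 x * (f x - \<theta>0)\<^sup>2 \<partial>M) + (\<integral>\<^sup>+ x. p1 x * (f x - \<theta>1)\<^sup>2 \<partial>M)) +
      ennreal (1 / t) * 2"
    by (simp add: nn_integral_add nn_integral_cmult mass)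
  finally show ?thesis .
qed

lemma two_point_risk_lower_bound:
  fixes p0 p1 f :: "'a \<Rightarrow> real"
  assumes [measurable]: "p0 \<in> borel_measurable M" "p1 \<in> borel_measurable M" "f \<in> borel_measurable M"
    and nonneg: "\<And>x. 0 \<le> p0 x" "\<And>x. 0 \<le> p1 x"
    and mass: "(\<integral>\<^sup>+ x. p0 x \<partial>M) = 1" "(\<integral>\<^sup>+ x. p1 x \<partial>M) = 1"
    and affinity: "ennreal \<rho> \<le> (\<integral>\<^sup>+ x. sqrt (p0 x * p1 x) \<partial>M)" "0 \<le> \<rho>"
  shows "ennreal ((\<theta>1 - \<theta>0)\<^sup>2 / 4 * \<rho>\<^sup>2) \<le>
    max (\<integral>\<^sup>+ x. p0 x * (f x - \<theta>0)\<^sup>2 \<partial>M) (\<integral>\<^sup>+ x. p1 x * (f x - \<theta>1)\<^sup>2 \<partial>M)"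
    (is "_ \<le> max ?R0 ?R1")
proof -
  define c where "c = \<bar>\<theta>1 - \<theta>0\<bar> * \<rho> / 2"
  have c_sq: "(\<theta>1 - \<theta>0)\<^sup>2 / 4 * \<rho>\<^sup>2 = c\<^sup>2"
    by (simp add: c_def power_mult_distrib power_divide)
  show ?thesis
  proof (cases "c = 0 \<or> ?R0 = \<top> \<or> ?R1 = \<top>")
    case True
    then show ?thesis
    proof (elim disjE)
      assume "c = 0"
      then have "(\<theta>1 - \<theta>0)\<^sup>2 / 4 * \<rho>\<^sup>2 = 0"
        using c_sq by simp
      then show ?thesis
        by (metis ennreal_0 zero_le)
    qed (simp_all only: max_top max_top2 top_greatest)
  next
    case False
    obtain r0 where r0: "?R0 = ennreal r0" "0 \<le> r0"
      using False by (cases ?R0) auto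
    obtain r1 where r1: "?R1 = ennreal r1" "0 \<le> r1"
      using False by (cases ?R1) auto
    have "0 < c"
      using False affinity(2) by (simp add: c_def)
    \<comment> \<open>The AM-GM weight 1/c is optimal in the extremal case R0 + R1 = 2 c^2.\<close>
    have "ennreal (4 * c) \<le> ennreal (2 * \<bar>\<theta>1 - \<theta>0\<bar>) * (\<integral>\<^sup>+ x. sqrt (p0 x * p1 x) \<partial>M)"
      using mult_left_mono[OF affinity(1), of "ennreal (2 * \<bar>\<theta>1 - \<theta>0\<bar>)"] affinity(2)
      by (simp add: c_def ennreal_mult''[symmetric] mult_ac)
    also have "\<dots> \<le> ennreal (1 / c) * (?R0 + ?R1) + ennreal c * 2"
      using \<open>0 < c\<close> two_point_integral_bound[OF assms(1-7), of "1 / c"] by simp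
    also have "\<dots> = ennreal ((r0 + r1) / c + 2 * c)"
      using r0 r1 \<open>0 < c\<close>
      by (simp add: ennreal_mult''[symmetric] ennreal_numeral[symmetric] ennreal_plus[symmetric]
          del: ennreal_numeral ennreal_plus)
    finally have "4 * c \<le> (r0 + r1) / c + 2 * c"
      using r0 r1 \<open>0 < c\<close> by (subst (asm) ennreal_le_iff) auto
    then have "c\<^sup>2 \<le> max r0 r1"
      using \<open>0 < c\<close> by (simp add: field_simps power2_eq_square max_def)
    then show ?thesis
      using r0(2) r1(2) unfolding c_sq r0(1) r1(1)
      by (cases "r0 \<le> r1") (auto simp: max_def intro: ennreal_leI)
  qed
qed

lemma max_risk_ge_two_point:
  assumes "est \<in> borel_measurable (borel \<Otimes>\<^sub>M borel)"
    and "\<bar>\<theta>0\<bar> \<le> \<tau>" "\<bar>\<delta>0\<bar> \<le> \<zeta>" "\<bar>\<theta>1\<bar> \<le> \<tau>" "\<bar>\<delta>1\<bar> \<le> \<zeta>"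
  shows "ennreal ((\<theta>1 - \<theta>0)\<^sup>2 / 4 *
      exp (- ((s * \<theta>1 + \<delta>1 - (s * \<theta>0 + \<delta>0))\<^sup>2 + (\<theta>1 - \<theta>0)\<^sup>2) / 4)) \<le> max_risk \<tau> \<zeta> s est"
proof -
  have [measurable]: "est \<in> borel_measurable (lborel \<Otimes>\<^sub>M lborel)"
    using assms(1) by (simp add: measurable_cong_sets[OF sets_pair_measure_cong[OF sets_lborel sets_lborel] refl])
  define p where "p m \<theta> w = normal_density m 1 (fst w) * normal_density \<theta> 1 (snd w)"
    for m \<theta> :: real and w :: "real \<times> real"
  have [measurable]: "p m \<theta> \<in> borel_measurable (lborel \<Otimes>\<^sub>M lborel)" for m \<theta>
    unfolding p_def by measurable
  have risk_eq: "risk s est \<theta> \<delta> = (\<integral>\<^sup>+ w. p (s * \<theta> + \<delta>) \<theta> w * (est w - \<theta>)\<^sup>2 \<partial>(lborel \<Otimes>\<^sub>M lborel))"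
    for \<theta> \<delta>
    unfolding risk_def p_def
    by (subst nn_integral_gauss2) (auto intro!: nn_integral_cong simp: ennreal_mult''[symmetric])
  define \<rho> where "\<rho> = exp (- ((s * \<theta>1 + \<delta>1 - (s * \<theta>0 + \<delta>0))\<^sup>2 + (\<theta>1 - \<theta>0)\<^sup>2) / 8)"
  have "\<rho>\<^sup>2 = exp (- ((s * \<theta>1 + \<delta>1 - (s * \<theta>0 + \<delta>0))\<^sup>2 + (\<theta>1 - \<theta>0)\<^sup>2) / 4)"
    by (simp add: \<rho>_def flip: exp_double)
  moreover have "ennreal ((\<theta>1 - \<theta>0)\<^sup>2 / 4 * \<rho>\<^sup>2) \<le> max (risk s est \<theta>0 \<delta>0) (risk s est \<theta>1 \<delta>1)"
    unfolding risk_eq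
  proof (rule two_point_risk_lower_bound)
    show "ennreal \<rho> \<le> (\<integral>\<^sup>+ w. sqrt (p (s * \<theta>0 + \<delta>0) \<theta>0 w * p (s * \<theta>1 + \<delta>1) \<theta>1 w) \<partial>(lborel \<Otimes>\<^sub>M lborel))"
      unfolding p_def \<rho>_def nn_integral_sqrt_normal_density_pair
      by (simp add: power2_commute)
  qed (auto simp: p_def \<rho>_def nn_integral_normal_density_pair)
  moreover have "max (risk s est \<theta>0 \<delta>0) (risk s est \<theta>1 \<delta>1) \<le> max_risk \<tau> \<zeta> s est"
    unfolding max_risk_def using assms(2-) by (auto intro: SUP_upper2)
  ultimately show ?thesis
    by (metis order_trans)
qed

lemma R_N_ge_symmetric_two_point:
  assumes "\<bar>\<Delta>\<bar> \<le> \<tau>" "\<bar>d\<bar> \<le> \<zeta>"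
  shows "ennreal (\<Delta>\<^sup>2 * exp (- (\<Delta>\<^sup>2 + (s * \<Delta> - d)\<^sup>2))) \<le> R_N \<tau> \<zeta> s"
  unfolding R_N_def
proof (rule INF_greatest)
  fix est :: "real \<times> real \<Rightarrow> real"
  assume "est \<in> borel_measurable (borel \<Otimes>\<^sub>M borel)"
  have "(\<Delta> - - \<Delta>)\<^sup>2 / 4 = \<Delta>\<^sup>2"
    "- ((s * \<Delta> + - d - (s * - \<Delta> + d))\<^sup>2 + (\<Delta> - - \<Delta>)\<^sup>2) / 4 = - (\<Delta>\<^sup>2 + (s * \<Delta> - d)\<^sup>2)"
    by (simp_all add: power2_eq_square field_simps)
  then have "ennreal (\<Delta>\<^sup>2 * exp (- (\<Delta>\<^sup>2 + (s * \<Delta> - d)\<^sup>2))) =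
      ennreal ((\<Delta> - - \<Delta>)\<^sup>2 / 4 * exp (- ((s * \<Delta> + - d - (s * - \<Delta> + d))\<^sup>2 + (\<Delta> - - \<Delta>)\<^sup>2) / 4))"
    by (simp only:)
  also have "\<dots> \<le> max_risk \<tau> \<zeta> s est"
    by (rule max_risk_ge_two_point) (use \<open>est \<in> _\<close> assms in auto)
  finally show "ennreal (\<Delta>\<^sup>2 * exp (- (\<Delta>\<^sup>2 + (s * \<Delta> - d)\<^sup>2))) \<le> max_risk \<tau> \<zeta> s est" .
qed

lemma exp_minus_nat_ge: "1 / 3 ^ n \<le> exp (- real n)"
proof -
  have "exp 1 ^ n \<le> (3::real) ^ n"
    using exp_le by (intro power_mono) auto
  moreover have "exp (- real n) = 1 / exp 1 ^ n"
    by (simp add: exp_minus exp_of_nat_mult[symmetric] field_simps)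
  ultimately show ?thesis
    by (simp add: frac_le)
qed

lemma min_sq_le_scaled_min_sq:
  fixes \<tau> b c k s :: real
  assumes "s \<noteq> 0" "1 \<le> k" "c \<le> k * b\<^sup>2"
  shows "min (\<tau>\<^sup>2) (min 1 (c / s\<^sup>2)) \<le> k * (min \<tau> (min 1 (b / s)))\<^sup>2"
proof -
  have "\<tau>\<^sup>2 \<le> k * \<tau>\<^sup>2" "c / s\<^sup>2 \<le> k * (b / s)\<^sup>2"
    using assms by (simp_all add: mult_le_cancel_right1 power_divide divide_right_mono)
  moreover have "min \<tau> (min 1 (b / s)) \<in> {\<tau>, 1, b / s}"
    by (auto simp: min_def)
  ultimately show ?thesis
    using assms(2) by (auto simp: min_le_iff_disj)
qed

lemma two_point_choice_large_bias:
  fixes \<tau> \<zeta> s :: real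
  assumes "0 < \<tau>" "1 \<le> \<zeta>" "0 < s"
  obtains \<Delta> d where "\<bar>\<Delta>\<bar> \<le> \<tau>" "\<bar>d\<bar> \<le> \<zeta>"
    "min (\<tau>\<^sup>2) (min 1 ((1 + \<zeta>\<^sup>2) / s\<^sup>2)) \<le> 27 / 2 * (\<Delta>\<^sup>2 * exp (- (\<Delta>\<^sup>2 + (s * \<Delta> - d)\<^sup>2)))"
proof
  define \<Delta> where "\<Delta> = min \<tau> (min 1 (\<zeta> / s))"
  \<comment> \<open>With d = s \<Delta> both hypotheses give w1 the same mean; only w2 separates them.\<close>
  have "0 \<le> \<Delta>" "\<Delta> \<le> 1" "\<Delta> \<le> \<zeta> / s"
    using assms by (simp_all add: \<Delta>_def)
  then have "s * \<Delta> \<le> \<zeta>"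
    using assms by (simp add: pos_le_divide_eq mult.commute)
  show "\<bar>\<Delta>\<bar> \<le> \<tau>" "\<bar>s * \<Delta>\<bar> \<le> \<zeta>"
    using \<open>0 \<le> \<Delta>\<close> \<open>s * \<Delta> \<le> \<zeta>\<close> assms by (auto simp: \<Delta>_def)
  have "1 + \<zeta>\<^sup>2 \<le> 2 * \<zeta>\<^sup>2"
    using assms by (simp add: one_le_power)
  then have "min (\<tau>\<^sup>2) (min 1 ((1 + \<zeta>\<^sup>2) / s\<^sup>2)) \<le> 2 * \<Delta>\<^sup>2"
    unfolding \<Delta>_def using assms by (intro min_sq_le_scaled_min_sq) auto
  moreover have "1 / 3 \<le> exp (- (\<Delta>\<^sup>2 + (s * \<Delta> - s * \<Delta>)\<^sup>2))"
  proof -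
    have "\<Delta>\<^sup>2 \<le> 1"
      using \<open>0 \<le> \<Delta>\<close> \<open>\<Delta> \<le> 1\<close> by (simp add: power_le_one)
    then show ?thesis
      using exp_minus_nat_ge[of 1] by (simp add: order_trans)
  qed
  then have "\<Delta>\<^sup>2 * (1 / 3) \<le> \<Delta>\<^sup>2 * exp (- (\<Delta>\<^sup>2 + (s * \<Delta> - s * \<Delta>)\<^sup>2))"
    by (rule mult_left_mono) simp
  ultimately show "min (\<tau>\<^sup>2) (min 1 ((1 + \<zeta>\<^sup>2) / s\<^sup>2)) \<le>
      27 / 2 * (\<Delta>\<^sup>2 * exp (- (\<Delta>\<^sup>2 + (s * \<Delta> - s * \<Delta>)\<^sup>2)))"
    using zero_le_power2[of \<Delta>] by linarith
qed

lemma two_point_choice_small_bias: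
  fixes \<tau> \<zeta> s :: real
  assumes "0 < \<tau>" "0 < \<zeta>" "\<zeta> < 1" "0 < s"
  obtains \<Delta> d where "\<bar>\<Delta>\<bar> \<le> \<tau>" "\<bar>d\<bar> \<le> \<zeta>"
    "min (\<tau>\<^sup>2) (min 1 ((1 + \<zeta>\<^sup>2) / s\<^sup>2)) \<le> 27 / 2 * (\<Delta>\<^sup>2 * exp (- (\<Delta>\<^sup>2 + (s * \<Delta> - d)\<^sup>2)))"
proof
  define \<Delta> where "\<Delta> = min \<tau> (min 1 (1 / s))"
  define d where "d = min \<zeta> (s * \<Delta>)"
  have "0 \<le> \<Delta>" "\<Delta> \<le> 1" "\<Delta> \<le> 1 / s"
    using assms by (simp_all add: \<Delta>_def)
  then have "s * \<Delta> \<le> 1"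
    using assms by (simp add: pos_le_divide_eq mult.commute)
  show "\<bar>\<Delta>\<bar> \<le> \<tau>" "\<bar>d\<bar> \<le> \<zeta>"
    using \<open>0 \<le> \<Delta>\<close> assms by (auto simp: \<Delta>_def d_def)
  have "1 + \<zeta>\<^sup>2 \<le> (1 + \<zeta>) * 1\<^sup>2"
    using assms by (simp add: power2_eq_square mult_le_cancel_right1)
  then have "min (\<tau>\<^sup>2) (min 1 ((1 + \<zeta>\<^sup>2) / s\<^sup>2)) \<le> (1 + \<zeta>) * \<Delta>\<^sup>2"
    unfolding \<Delta>_def using assms by (intro min_sq_le_scaled_min_sq) auto
  moreover have "(1 + \<zeta>) / 9 \<le> exp (- (\<Delta>\<^sup>2 + (s * \<Delta> - d)\<^sup>2))"
  proof -
    have "0 \<le> s * \<Delta> - d" "s * \<Delta> - d \<le> 1 - \<zeta>"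
      using \<open>s * \<Delta> \<le> 1\<close> assms by (auto simp: d_def min_def)
    then have "(s * \<Delta> - d)\<^sup>2 \<le> 1 - \<zeta>"
      using assms by (smt (verit) mult_left_le_one_le power2_eq_square)
    moreover have "\<Delta>\<^sup>2 \<le> 1"
      using \<open>0 \<le> \<Delta>\<close> \<open>\<Delta> \<le> 1\<close> by (simp add: power_le_one)
    ultimately have "exp \<zeta> * exp (- 2) \<le> exp (- (\<Delta>\<^sup>2 + (s * \<Delta> - d)\<^sup>2))"
      by (simp flip: exp_add)
    moreover have "(1 + \<zeta>) * (1 / 9) \<le> exp \<zeta> * exp (- 2)"
      using exp_ge_add_one_self[of \<zeta>] exp_minus_nat_ge[of 2] by (intro mult_mono) auto
    ultimately show ?thesis
      by linarith
  qed
  then have "\<Delta>\<^sup>2 * ((1 + \<zeta>) / 9) \<le> \<Delta>\<^sup>2 * exp (- (\<Delta>\<^sup>2 + (s * \<Delta> - d)\<^sup>2))"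
    by (rule mult_left_mono) simp
  moreover have "(1 + \<zeta>) * \<Delta>\<^sup>2 \<le> 27 / 2 * (\<Delta>\<^sup>2 * ((1 + \<zeta>) / 9))"
    using assms by (simp add: field_simps)
  ultimately show "min (\<tau>\<^sup>2) (min 1 ((1 + \<zeta>\<^sup>2) / s\<^sup>2)) \<le>
      27 / 2 * (\<Delta>\<^sup>2 * exp (- (\<Delta>\<^sup>2 + (s * \<Delta> - d)\<^sup>2)))"
    by linarith
qed

theorem lemma4:
  fixes \<tau> \<zeta> s :: real
  assumes "\<tau> > 0" and "\<zeta> > 0" and "s > 0"
  shows "R_L \<tau> \<zeta> s \<le> ennreal (27 / 2) * R_N \<tau> \<zeta> s"
proof -
  obtain \<Delta> d where box: "\<bar>\<Delta>\<bar> \<le> \<tau>" "\<bar>d\<bar> \<le> \<zeta>" and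
    choice: "min (\<tau>\<^sup>2) (min 1 ((1 + \<zeta>\<^sup>2) / s\<^sup>2)) \<le> 27 / 2 * (\<Delta>\<^sup>2 * exp (- (\<Delta>\<^sup>2 + (s * \<Delta> - d)\<^sup>2)))"
    using assms two_point_choice_large_bias two_point_choice_small_bias by (metis not_le)
  have "R_L \<tau> \<zeta> s \<le> ennreal (min (\<tau>\<^sup>2) (min 1 ((1 + \<zeta>\<^sup>2) / s\<^sup>2)))"
    using assms by (intro R_L_le_min) simp
  also have "\<dots> \<le> ennreal (27 / 2) * ennreal (\<Delta>\<^sup>2 * exp (- (\<Delta>\<^sup>2 + (s * \<Delta> - d)\<^sup>2)))"
    using choice by (simp add: ennreal_mult[symmetric] ennreal_leI)
  also have "\<dots> \<le> ennreal (27 / 2) * R_N \<tau> \<zeta> s"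
    using box by (intro mult_left_mono R_N_ge_symmetric_two_point) auto
  finally show ?thesis .
qed

end
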